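(* In the setting described in the context, let $0<r\le1$ and $k\ge0$, and let $s\in S\setminus(T\cup W_2)$ with $s\in U^k_r$. Then for every move $a_2\in\Gamma_2(s)$: either (1) $\mathrm{Dest}_k(s,a_2)\cap U^k_{>r}\ne\emptyset$, or (2) $\mathrm{Dest}_k(s,a_2)\subseteq U^k_r$ and there is a state $t\in\mathrm{Dest}_k(s,a_2)$ with $\ell_k(t)<\ell_k(s)$.
   Context: Concurrent game structure $G=(S,M,\Gamma_1,\Gamma_2,\delta)$: finite states, finite moves, nonempty move sets $\Gamma_i(s)$, $\delta(s,a_1,a_2)\in\mathrm{Distr}(S)$ (simultaneous independent moves); $\mathrm{Dest}(s,a_1,a_2)=\mathrm{supp}\,\delta(s,a_1,a_2)$. Selectors assign to each state a distribution on available moves. For a valuation $v:S\to[0,1]$: $\mathrm{Pre}_{\xi_1,\xi_2}(v)(s)=\sum_{a,b}\sum_tv(t)\delta(s,a,b)(t)\xi_1(s)(a)\xi_2(s)(b)$, $\mathrm{Pre}_{1:\xi_1}(v)(s)=\inf_{\xi_2}\mathrm{Pre}_{\xi_1,\xi_2}(v)(s)$, $\mathrm{Pre}_1(v)(s)=\sup_{\xi_1}\mathrm{Pre}_{1:\xi_1}(v)(s)$. Fix $T\subseteq S$; $W_2$ is the set of states from which player 1's value for reaching $T$ ($\sup_{\pi_1}\inf_{\pi_2}$ of the probability of visiting $T$) is 0; all states of $T\cup W_2$ are assumed absorbing. Value iteration: $u_0=[T]$ (indicator of $T$), $u_{k+1}=\mathrm{Pre}_1(u_k)$. For each $j\ge1$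 fix a player-1 selector $\zeta_j$ with $\mathrm{Pre}_{1:\zeta_j}(u_{j-1})=\mathrm{Pre}_1(u_{j-1})$. Entry time: $\ell_k(s)=\min\{j\le k:u_j(s)=u_k(s)\}$. Selector $\eta_k$: $\eta_k(s)=\zeta_{\ell_k(s)}(s)$ if $\ell_k(s)>0$, and $\eta_k(s)$ uniform on $\Gamma_1(s)$ if $\ell_k(s)=0$. $\mathrm{Dest}_k(s,a_2)=\bigcup_{a_1\in\mathrm{supp}(\eta_k(s))}\mathrm{Dest}(s,a_1,a_2)$. Value classes: $U^k_r=\{s:u_k(s)=r\}$ and $U^k_{>r}=\{s:u_k(s)>r\}$. *)

theory Defs
  imports "HOL-Probability.Probability_Mass_Function"
begin

(* Concurrent game structure: states of finite type 's, moves of finite type 'm,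
   move sets G1 G2 :: 's => 'm set, transition function d :: 's => 'm => 'm => 's pmf. *)

definition Dest :: "('s \<Rightarrow> 'm \<Rightarrow> 'm \<Rightarrow> 's pmf) \<Rightarrow> 's \<Rightarrow> 'm \<Rightarrow> 'm \<Rightarrow> 's set" where
  "Dest d s a1 a2 = set_pmf (d s a1 a2)"

definition selectors :: "('s \<Rightarrow> 'm set) \<Rightarrow> ('s \<Rightarrow> 'm pmf) set" where
  "selectors G = {xi. \<forall>s. set_pmf (xi s) \<subseteq> G s}"

definition Pre_sel2 :: "('s::finite \<Rightarrow> 'm::finite \<Rightarrow> 'm \<Rightarrow> 's pmf) \<Rightarrow> ('s \<Rightarrow> 'm pmf) \<Rightarrow> ('s \<Rightarrow> 'm pmf)
     \<Rightarrow> ('s \<Rightarrow> real) \<Rightarrow> 's \<Rightarrow> real" where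
  "Pre_sel2 d xi1 xi2 v s =
     (\<Sum>a\<in>UNIV. \<Sum>b\<in>UNIV. \<Sum>t\<in>UNIV. v t * pmf (d s a b) t * pmf (xi1 s) a * pmf (xi2 s) b)"

definition Pre1_sel :: "('s \<Rightarrow> 'm set) \<Rightarrow> ('s::finite \<Rightarrow> 'm::finite \<Rightarrow> 'm \<Rightarrow> 's pmf) \<Rightarrow> ('s \<Rightarrow> 'm pmf)
     \<Rightarrow> ('s \<Rightarrow> real) \<Rightarrow> 's \<Rightarrow> real" where
  "Pre1_sel G2 d xi1 v s = (INF xi2\<in>selectors G2. Pre_sel2 d xi1 xi2 v s)"

definition Pre1 :: "('s \<Rightarrow> 'm set) \<Rightarrow> ('s \<Rightarrow> 'm set) \<Rightarrow> ('s::finite \<Rightarrow> 'm::finite \<Rightarrow> 'm \<Rightarrow> 's pmf)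
     \<Rightarrow> ('s \<Rightarrow> real) \<Rightarrow> 's \<Rightarrow> real" where
  "Pre1 G1 G2 d v s = (SUP xi1\<in>selectors G1. Pre1_sel G2 d xi1 v s)"

definition u_iter :: "('s \<Rightarrow> 'm set) \<Rightarrow> ('s \<Rightarrow> 'm set) \<Rightarrow> ('s::finite \<Rightarrow> 'm::finite \<Rightarrow> 'm \<Rightarrow> 's pmf)
     \<Rightarrow> 's set \<Rightarrow> nat \<Rightarrow> 's \<Rightarrow> real" where
  "u_iter G1 G2 d T k = (Pre1 G1 G2 d ^^ k) (indicator T)"

definition entry :: "('s \<Rightarrow> 'm set) \<Rightarrow> ('s \<Rightarrow> 'm set) \<Rightarrow> ('s::finite \<Rightarrow> 'm::finite \<Rightarrow> 'm \<Rightarrow> 's pmf)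
     \<Rightarrow> 's set \<Rightarrow> nat \<Rightarrow> 's \<Rightarrow> nat" where
  "entry G1 G2 d T k s = (LEAST j. j \<le> k \<and> u_iter G1 G2 d T j s = u_iter G1 G2 d T k s)"

(* selector eta_k built from the fixed optimal selectors zeta_j *)
definition eta :: "('s \<Rightarrow> 'm set) \<Rightarrow> ('s \<Rightarrow> 'm set) \<Rightarrow> ('s::finite \<Rightarrow> 'm::finite \<Rightarrow> 'm \<Rightarrow> 's pmf)
     \<Rightarrow> 's set \<Rightarrow> (nat \<Rightarrow> 's \<Rightarrow> 'm pmf) \<Rightarrow> nat \<Rightarrow> 's \<Rightarrow> 'm pmf" where
  "eta G1 G2 d T zeta k s =
     (if entry G1 G2 d T k s > 0 then zeta (entry G1 G2 d T k s) s else pmf_of_set (G1 s))"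

definition Dest_k :: "('s \<Rightarrow> 'm set) \<Rightarrow> ('s \<Rightarrow> 'm set) \<Rightarrow> ('s::finite \<Rightarrow> 'm::finite \<Rightarrow> 'm \<Rightarrow> 's pmf)
     \<Rightarrow> 's set \<Rightarrow> (nat \<Rightarrow> 's \<Rightarrow> 'm pmf) \<Rightarrow> nat \<Rightarrow> 's \<Rightarrow> 'm \<Rightarrow> 's set" where
  "Dest_k G1 G2 d T zeta k s a2 = (\<Union>a1\<in>set_pmf (eta G1 G2 d T zeta k s). Dest d s a1 a2)"

(* strategies: maps from (nonempty) histories, last element = current state, to
   distributions over moves available at the current state *)
definition strategies :: "('s \<Rightarrow> 'm set) \<Rightarrow> ('s list \<Rightarrow> 'm pmf) set" where
  "strategies G = {pi. \<forall>h. h \<noteq> [] \<longrightarrow> set_pmf (pi h) \<subseteq> G (last h)}"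

primrec reach_within :: "('s \<Rightarrow> 'm \<Rightarrow> 'm \<Rightarrow> 's pmf) \<Rightarrow> 's set \<Rightarrow> ('s list \<Rightarrow> 'm pmf) \<Rightarrow> ('s list \<Rightarrow> 'm pmf)
     \<Rightarrow> nat \<Rightarrow> 's list \<Rightarrow> real" where
  "reach_within d T pi1 pi2 0 h = (if last h \<in> T then 1 else 0)"
| "reach_within d T pi1 pi2 (Suc n) h =
     (if last h \<in> T then 1 else
       measure_pmf.expectation
         (bind_pmf (pi1 h) (\<lambda>a. bind_pmf (pi2 h) (\<lambda>b. d (last h) a b)))
         (\<lambda>t. reach_within d T pi1 pi2 n (h @ [t])))"

definition reach_prob :: "('s \<Rightarrow> 'm \<Rightarrow> 'm \<Rightarrow> 's pmf) \<Rightarrow> 's set \<Rightarrow> ('s list \<Rightarrow> 'm pmf) \<Rightarrow> ('s list \<Rightarrow> 'm pmf)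
     \<Rightarrow> 's \<Rightarrow> real" where
  "reach_prob d T pi1 pi2 s = (SUP n. reach_within d T pi1 pi2 n [s])"

definition val1 :: "('s \<Rightarrow> 'm set) \<Rightarrow> ('s \<Rightarrow> 'm set) \<Rightarrow> ('s \<Rightarrow> 'm \<Rightarrow> 'm \<Rightarrow> 's pmf) \<Rightarrow> 's set \<Rightarrow> 's \<Rightarrow> real" where
  "val1 G1 G2 d T s = (SUP pi1\<in>strategies G1. INF pi2\<in>strategies G2. reach_prob d T pi1 pi2 s)"

definition W2 :: "('s \<Rightarrow> 'm set) \<Rightarrow> ('s \<Rightarrow> 'm set) \<Rightarrow> ('s \<Rightarrow> 'm \<Rightarrow> 'm \<Rightarrow> 's pmf) \<Rightarrow> 's set \<Rightarrow> 's set" where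
  "W2 G1 G2 d T = {s. val1 G1 G2 d T s = 0}"

definition absorbing :: "('s \<Rightarrow> 'm set) \<Rightarrow> ('s \<Rightarrow> 'm set) \<Rightarrow> ('s \<Rightarrow> 'm \<Rightarrow> 'm \<Rightarrow> 's pmf) \<Rightarrow> 's \<Rightarrow> bool" where
  "absorbing G1 G2 d s = (\<forall>a1\<in>G1 s. \<forall>a2\<in>G2 s. d s a1 a2 = return_pmf s)"

end

theory Submission
  imports Defs
begin

text \<open>
  Let \<open>l = \<ell>\<^sub>k(s)\<close>; since \<open>s \<notin> T\<close> and \<open>r > 0\<close> we have \<open>l \<ge> 1\<close>, and
  \<open>\<eta>\<^sub>k(s) = \<zeta>\<^sub>l(s)\<close> is optimal for \<open>u\<^sub>l = Pre\<^sub>1(u\<^sub>l\<^sub>-\<^sub>1)\<close>. Against the fixed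
  move \<open>a\<^sub>2\<close> it therefore guarantees \<open>r = u\<^sub>l(s) \<le> E[u\<^sub>l\<^sub>-\<^sub>1(t)]\<close>, the expectation
  taken over the successor \<open>t\<close>, which ranges over \<open>Dest\<^sub>k(s,a\<^sub>2)\<close>. Value iteration is
  monotone, so if no successor has \<open>u\<^sub>k(t) > r\<close> then \<open>u\<^sub>l\<^sub>-\<^sub>1(t) \<le> u\<^sub>k(t) \<le> r\<close> on
  the support, and the expectation bound forces \<open>u\<^sub>l\<^sub>-\<^sub>1(t) = u\<^sub>k(t) = r\<close> for every
  successor; in particular \<open>\<ell>\<^sub>k(t) \<le> l - 1\<close>.
\<close>

lemma pmf_support_eq_if_mean_ge:
  fixes p :: "'a::finite pmf"
  assumes le: "\<And>t. t \<in> set_pmf p \<Longrightarrow> v t \<le> r"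
    and mean: "r \<le> (\<Sum>t\<in>UNIV. v t * pmf p t)"
    and t: "t \<in> set_pmf p"
  shows "v t = r"
proof -
  have gap_nonneg: "0 \<le> (r - v x) * pmf p x" for x
    using le[of x] by (cases "x \<in> set_pmf p") (auto simp: set_pmf_iff)
  have "(\<Sum>x\<in>UNIV. (r - v x) * pmf p x) = r - (\<Sum>x\<in>UNIV. v x * pmf p x)"
    by (simp add: left_diff_distrib sum_subtractf sum_distrib_left[symmetric] sum_pmf_eq_1)
  moreover have "0 \<le> (\<Sum>x\<in>UNIV. (r - v x) * pmf p x)"
    by (intro sum_nonneg gap_nonneg)
  ultimately have "(\<Sum>x\<in>UNIV. (r - v x) * pmf p x) = 0"
    using mean by linarith
  then have "\<forall>x\<in>UNIV. (r - v x) * pmf p x = 0"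
    using sum_nonneg_eq_0_iff[where f="\<lambda>x. (r - v x) * pmf p x", OF finite] gap_nonneg by blast
  with t show ?thesis by (force simp: set_pmf_iff)
qed

lemma selectors_nonempty:
  fixes G :: "'s \<Rightarrow> 'm::finite set"
  assumes "\<And>x. G x \<noteq> {}"
  shows "selectors G \<noteq> {}"
proof -
  have "(\<lambda>x. pmf_of_set (G x)) \<in> selectors G"
    using assms by (simp add: selectors_def)
  then show ?thesis by blast
qed

lemma Pre_sel2_eq_sum_moves:
  "Pre_sel2 d xi1 xi2 v s =
     (\<Sum>a\<in>UNIV. \<Sum>b\<in>UNIV. pmf (xi1 s) a * pmf (xi2 s) b * (\<Sum>t\<in>UNIV. v t * pmf (d s a b) t))"
  by (simp add: Pre_sel2_def sum_distrib_left mult_ac)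

lemma Pre_sel2_nonneg:
  assumes "\<And>t. 0 \<le> v t"
  shows "0 \<le> Pre_sel2 d xi1 xi2 v s"
  unfolding Pre_sel2_eq_sum_moves by (intro sum_nonneg mult_nonneg_nonneg) (auto simp: assms)

lemma Pre_sel2_le_1:
  assumes "\<And>t. v t \<le> 1"
  shows "Pre_sel2 d xi1 xi2 v s \<le> 1"
proof -
  have "(\<Sum>t\<in>UNIV. v t * pmf (d s a b) t) \<le> 1" for a b
  proof -
    have "(\<Sum>t\<in>UNIV. v t * pmf (d s a b) t) \<le> (\<Sum>t\<in>UNIV. pmf (d s a b) t)"
      using mult_right_mono[OF assms pmf_nonneg] by (intro sum_mono) simp
    then show ?thesis by (simp add: sum_pmf_eq_1)
  qed
  then have "Pre_sel2 d xi1 xi2 v s \<le> (\<Sum>a\<in>UNIV. \<Sum>b\<in>UNIV. pmf (xi1 s) a * pmf (xi2 s) b)"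
    unfolding Pre_sel2_eq_sum_moves
    by (intro sum_mono) (simp add: mult_left_le)
  also have "\<dots> = 1"
    by (simp add: sum_distrib_left[symmetric] sum_pmf_eq_1)
  finally show ?thesis .
qed

lemma Pre_sel2_mono:
  assumes "\<And>t. v t \<le> w t"
  shows "Pre_sel2 d xi1 xi2 v s \<le> Pre_sel2 d xi1 xi2 w s"
  unfolding Pre_sel2_eq_sum_moves
  by (intro sum_mono mult_left_mono mult_right_mono) (auto simp: assms)

lemma Pre_sel2_fixed_move:
  assumes "xi2 s = return_pmf b"
  shows "Pre_sel2 d xi1 xi2 v s = (\<Sum>t\<in>UNIV. v t * pmf (bind_pmf (xi1 s) (\<lambda>a. d s a b)) t)"
proof -
  have "Pre_sel2 d xi1 xi2 v s = (\<Sum>a\<in>UNIV. pmf (xi1 s) a * (\<Sum>t\<in>UNIV. v t * pmf (d s a b) t))"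
    unfolding Pre_sel2_eq_sum_moves assms
  proof (intro sum.cong refl)
    fix a
    have "(\<Sum>b'\<in>UNIV. pmf (xi1 s) a * pmf (return_pmf b) b' * (\<Sum>t\<in>UNIV. v t * pmf (d s a b') t))
        = (\<Sum>b'\<in>UNIV. if b' = b then pmf (xi1 s) a * (\<Sum>t\<in>UNIV. v t * pmf (d s a b') t) else 0)"
      by (intro sum.cong refl) (simp add: indicator_def)
    then show "(\<Sum>b'\<in>UNIV. pmf (xi1 s) a * pmf (return_pmf b) b' * (\<Sum>t\<in>UNIV. v t * pmf (d s a b') t))
        = pmf (xi1 s) a * (\<Sum>t\<in>UNIV. v t * pmf (d s a b) t)"
      by (simp only: sum.delta[OF finite] UNIV_I if_True)
  qed
  also have "\<dots> = (\<Sum>a\<in>UNIV. \<Sum>t\<in>UNIV. v t * (pmf (d s a b) t * pmf (xi1 s) a))"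
    by (simp add: sum_distrib_left mult_ac)
  also have "\<dots> = (\<Sum>t\<in>UNIV. \<Sum>a\<in>UNIV. v t * (pmf (d s a b) t * pmf (xi1 s) a))"
    by (rule sum.swap)
  also have "\<dots> = (\<Sum>t\<in>UNIV. v t * (\<Sum>a\<in>UNIV. pmf (d s a b) t * pmf (xi1 s) a))"
    by (simp add: sum_distrib_left)
  also have "\<dots> = (\<Sum>t\<in>UNIV. v t * pmf (bind_pmf (xi1 s) (\<lambda>a. d s a b)) t)"
    by (simp add: pmf_bind integral_measure_pmf_real[where A=UNIV])
  finally show ?thesis .
qed

lemma Pre_sel2_absorbing:
  assumes "absorbing G1 G2 d s" "xi1 \<in> selectors G1" "xi2 \<in> selectors G2"
  shows "Pre_sel2 d xi1 xi2 v s = v s"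
proof -
  have "Pre_sel2 d xi1 xi2 v s = (\<Sum>a\<in>UNIV. \<Sum>b\<in>UNIV. pmf (xi1 s) a * pmf (xi2 s) b * v s)"
    unfolding Pre_sel2_eq_sum_moves
  proof (intro sum.cong refl)
    fix a b
    show "pmf (xi1 s) a * pmf (xi2 s) b * (\<Sum>t\<in>UNIV. v t * pmf (d s a b) t)
        = pmf (xi1 s) a * pmf (xi2 s) b * v s"
    proof (cases "a \<in> set_pmf (xi1 s) \<and> b \<in> set_pmf (xi2 s)")
      case True
      then have "a \<in> G1 s" "b \<in> G2 s"
        using assms(2,3) by (auto simp: selectors_def)
      then have "d s a b = return_pmf s"
        using assms(1) by (auto simp: absorbing_def)
      then show ?thesis by (simp add: indicator_def)
    qed (auto simp: set_pmf_iff)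
  qed
  also have "\<dots> = v s"
    by (simp add: sum_distrib_left[symmetric] sum_distrib_right[symmetric] sum_pmf_eq_1)
  finally show ?thesis .
qed

lemma Pre1_sel_le_Pre_sel2:
  assumes "\<And>t. 0 \<le> v t" "xi2 \<in> selectors G2"
  shows "Pre1_sel G2 d xi1 v s \<le> Pre_sel2 d xi1 xi2 v s"
  unfolding Pre1_sel_def
  using assms(2) Pre_sel2_nonneg[where v=v, OF assms(1)] by (intro cINF_lower bdd_belowI[of _ 0]) auto

lemma Pre1_sel_bounds:
  assumes "\<And>t. 0 \<le> v t" "\<And>t. v t \<le> 1" "\<And>x. G2 x \<noteq> {}"
  shows "0 \<le> Pre1_sel G2 d xi1 v s" "Pre1_sel G2 d xi1 v s \<le> 1"
proof -
  show "0 \<le> Pre1_sel G2 d xi1 v s"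
    unfolding Pre1_sel_def
    using selectors_nonempty[of G2, OF assms(3)] Pre_sel2_nonneg[where v=v, OF assms(1)]
    by (intro cINF_greatest) auto
  obtain xi2 where xi2: "xi2 \<in> selectors G2"
    using selectors_nonempty[of G2, OF assms(3)] by blast
  have "Pre1_sel G2 d xi1 v s \<le> Pre_sel2 d xi1 xi2 v s"
    using Pre1_sel_le_Pre_sel2[where v=v, OF assms(1) xi2] .
  also have "\<dots> \<le> 1"
    using Pre_sel2_le_1[where v=v, OF assms(2)] .
  finally show "Pre1_sel G2 d xi1 v s \<le> 1" .
qed

lemma Pre1_sel_mono:
  assumes "\<And>t. 0 \<le> v t" "\<And>t. v t \<le> w t" "\<And>x. G2 x \<noteq> {}"
  shows "Pre1_sel G2 d xi1 v s \<le> Pre1_sel G2 d xi1 w s"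
  unfolding Pre1_sel_def[of G2 d xi1 w]
proof (rule cINF_greatest[OF selectors_nonempty[of G2, OF assms(3)]])
  fix xi2 assume xi2: "xi2 \<in> selectors G2"
  have "Pre1_sel G2 d xi1 v s \<le> Pre_sel2 d xi1 xi2 v s"
    using Pre1_sel_le_Pre_sel2[where v=v, OF assms(1) xi2] .
  also have "\<dots> \<le> Pre_sel2 d xi1 xi2 w s"
    using Pre_sel2_mono[where v=v and w=w, OF assms(2)] .
  finally show "Pre1_sel G2 d xi1 v s \<le> Pre_sel2 d xi1 xi2 w s" .
qed

lemma Pre1_sel_le_Pre1:
  assumes "\<And>t. 0 \<le> v t" "\<And>t. v t \<le> 1" "\<And>x. G2 x \<noteq> {}" "xi1 \<in> selectors G1"
  shows "Pre1_sel G2 d xi1 v s \<le> Pre1 G1 G2 d v s"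
  unfolding Pre1_def
  using assms(4) Pre1_sel_bounds(2)[where v=v and d=d and s=s, OF assms(1-3)]
  by (intro cSUP_upper bdd_aboveI[of _ 1]) auto

lemma Pre1_bounds:
  assumes "\<And>t. 0 \<le> v t" "\<And>t. v t \<le> 1" "\<And>x. G1 x \<noteq> {}" "\<And>x. G2 x \<noteq> {}"
  shows "0 \<le> Pre1 G1 G2 d v s" "Pre1 G1 G2 d v s \<le> 1"
proof -
  show "Pre1 G1 G2 d v s \<le> 1"
    unfolding Pre1_def
    using selectors_nonempty[of G1, OF assms(3)] Pre1_sel_bounds(2)[where v=v, OF assms(1,2,4)]
    by (intro cSUP_least) auto
  obtain xi1 where xi1: "xi1 \<in> selectors G1"
    using selectors_nonempty[of G1, OF assms(3)] by blast
  have "0 \<le> Pre1_sel G2 d xi1 v s"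
    using Pre1_sel_bounds(1)[where v=v, OF assms(1,2,4)] .
  also have "\<dots> \<le> Pre1 G1 G2 d v s"
    using Pre1_sel_le_Pre1[where v=v, OF assms(1,2,4) xi1] .
  finally show "0 \<le> Pre1 G1 G2 d v s" .
qed

lemma Pre1_mono:
  assumes "\<And>t. 0 \<le> v t" "\<And>t. v t \<le> w t" "\<And>t. w t \<le> 1"
    "\<And>x. G1 x \<noteq> {}" "\<And>x. G2 x \<noteq> {}"
  shows "Pre1 G1 G2 d v s \<le> Pre1 G1 G2 d w s"
  unfolding Pre1_def[of G1 G2 d v]
proof (rule cSUP_least[OF selectors_nonempty[of G1, OF assms(4)]])
  have w_nonneg: "0 \<le> w t" for t
    using assms(1,2) by (rule order_trans)
  fix xi1 assume xi1: "xi1 \<in> selectors G1"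
  have "Pre1_sel G2 d xi1 v s \<le> Pre1_sel G2 d xi1 w s"
    using Pre1_sel_mono[where v=v and w=w, OF assms(1,2,5)] .
  also have "\<dots> \<le> Pre1 G1 G2 d w s"
    using Pre1_sel_le_Pre1[where v=w, OF w_nonneg assms(3,5) xi1] .
  finally show "Pre1_sel G2 d xi1 v s \<le> Pre1 G1 G2 d w s" .
qed

lemma Pre1_absorbing:
  assumes "absorbing G1 G2 d s" "\<And>x. G1 x \<noteq> {}" "\<And>x. G2 x \<noteq> {}"
  shows "Pre1 G1 G2 d v s = v s"
proof -
  have "Pre1_sel G2 d xi1 v s = v s" if "xi1 \<in> selectors G1" for xi1
    unfolding Pre1_sel_def
    using Pre_sel2_absorbing[OF assms(1) that] selectors_nonempty[of G2, OF assms(3)] by simp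
  then show ?thesis
    unfolding Pre1_def using selectors_nonempty[of G1, OF assms(2)] by simp
qed

lemma Pre1_sel_le_fixed_move:
  assumes "\<And>t. 0 \<le> v t" "b \<in> G2 s" "\<And>x. G2 x \<noteq> {}"
  shows "Pre1_sel G2 d xi1 v s \<le> (\<Sum>t\<in>UNIV. v t * pmf (bind_pmf (xi1 s) (\<lambda>a. d s a b)) t)"
proof -
  define xi2 where "xi2 x = (if x = s then return_pmf b else pmf_of_set (G2 x))" for x
  have "xi2 \<in> selectors G2"
    using assms(2,3) by (auto simp: selectors_def xi2_def)
  then have "Pre1_sel G2 d xi1 v s \<le> Pre_sel2 d xi1 xi2 v s"
    by (rule Pre1_sel_le_Pre_sel2[where v=v, OF assms(1)])
  also have "\<dots> = (\<Sum>t\<in>UNIV. v t * pmf (bind_pmf (xi1 s) (\<lambda>a. d s a b)) t)"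
    by (rule Pre_sel2_fixed_move) (simp add: xi2_def)
  finally show ?thesis .
qed

lemma u_iter_0: "u_iter G1 G2 d T 0 = indicator T"
  by (simp add: u_iter_def)

lemma u_iter_Suc: "u_iter G1 G2 d T (Suc j) = Pre1 G1 G2 d (u_iter G1 G2 d T j)"
  by (simp add: u_iter_def)

lemma u_iter_bounds:
  assumes "\<And>x. G1 x \<noteq> {}" "\<And>x. G2 x \<noteq> {}"
  shows "0 \<le> u_iter G1 G2 d T j t \<and> u_iter G1 G2 d T j t \<le> 1"
proof (induction j arbitrary: t)
  case 0
  then show ?case by (simp add: u_iter_0 indicator_def)
next
  case (Suc j)
  then show ?case
    unfolding u_iter_Suc by (intro conjI Pre1_bounds assms) auto
qed

lemma u_iter_mono:
  assumes G1_ne: "\<And>x. G1 x \<noteq> {}" and G2_ne: "\<And>x. G2 x \<noteq> {}"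
    and absorb: "\<And>x. x \<in> T \<Longrightarrow> absorbing G1 G2 d x"
    and "i \<le> j"
  shows "u_iter G1 G2 d T i t \<le> u_iter G1 G2 d T j t"
proof -
  note bounds = u_iter_bounds[of G1 G2, OF G1_ne G2_ne]
  have "u_iter G1 G2 d T n t \<le> u_iter G1 G2 d T (Suc n) t" for n t
  proof (induction n arbitrary: t)
    case 0
    show ?case
    proof (cases "t \<in> T")
      case True
      then show ?thesis
        unfolding u_iter_Suc using Pre1_absorbing[OF absorb G1_ne G2_ne] by simp
    next
      case False
      then show ?thesis using bounds[where j=1 and t=t] by (simp add: u_iter_0)
    qed
  next
    case (Suc n)
    have "Pre1 G1 G2 d (u_iter G1 G2 d T n) t \<le> Pre1 G1 G2 d (u_iter G1 G2 d T (Suc n)) t"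
      using Suc.IH bounds by (intro Pre1_mono G1_ne G2_ne) auto
    then show ?case by (simp only: u_iter_Suc)
  qed
  then show ?thesis
    using lift_Suc_mono_le[of "\<lambda>n. u_iter G1 G2 d T n t", OF _ assms(4)] by blast
qed

lemma entry_le: "entry G1 G2 d T k s \<le> k"
  unfolding entry_def by (rule Least_le) simp

lemma u_iter_entry: "u_iter G1 G2 d T (entry G1 G2 d T k s) s = u_iter G1 G2 d T k s"
  unfolding entry_def by (rule LeastI2[of _ k]) simp_all

lemma entry_le_if_u_iter_eq:
  assumes "j \<le> k" "u_iter G1 G2 d T j s = u_iter G1 G2 d T k s"
  shows "entry G1 G2 d T k s \<le> j"
  unfolding entry_def using assms by (intro Least_le) simp

lemma Dest_k_eq_set_pmf:
  "Dest_k G1 G2 d T zeta k s b = set_pmf (bind_pmf (eta G1 G2 d T zeta k s) (\<lambda>a. d s a b))"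
  by (simp add: Dest_k_def Dest_def)

lemma u_iter_le_mean_eta:
  assumes G1_ne: "\<And>x. G1 x \<noteq> {}" and G2_ne: "\<And>x. G2 x \<noteq> {}"
    and zeta_opt: "\<And>j. j \<ge> 1 \<Longrightarrow>
      Pre1_sel G2 d (zeta j) (u_iter G1 G2 d T (j - 1)) = Pre1 G1 G2 d (u_iter G1 G2 d T (j - 1))"
    and entry_pos: "0 < entry G1 G2 d T k s"
    and b: "b \<in> G2 s"
  shows "u_iter G1 G2 d T k s \<le> (\<Sum>t\<in>UNIV. u_iter G1 G2 d T (entry G1 G2 d T k s - 1) t
                                   * pmf (bind_pmf (eta G1 G2 d T zeta k s) (\<lambda>a. d s a b)) t)"
proof -
  define l where "l = entry G1 G2 d T k s"
  have "u_iter G1 G2 d T k s = u_iter G1 G2 d T (Suc (l - 1)) s"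
    using u_iter_entry[of G1 G2 d T k s] entry_pos by (simp add: l_def)
  also have "\<dots> = Pre1_sel G2 d (zeta l) (u_iter G1 G2 d T (l - 1)) s"
    using zeta_opt[of l] entry_pos by (simp only: u_iter_Suc) (simp add: l_def)
  also have "\<dots> \<le> (\<Sum>t\<in>UNIV. u_iter G1 G2 d T (l - 1) t
                         * pmf (bind_pmf (zeta l s) (\<lambda>a. d s a b)) t)"
    using u_iter_bounds[of G1 G2, OF G1_ne G2_ne] by (intro Pre1_sel_le_fixed_move b G2_ne) blast
  finally show ?thesis
    using entry_pos by (simp add: eta_def l_def)
qed

lemma u_iter_eq_on_Dest_k_if_no_improvement:
  assumes G1_ne: "\<And>x. G1 x \<noteq> {}" and G2_ne: "\<And>x. G2 x \<noteq> {}"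
    and absorb: "\<And>x. x \<in> T \<Longrightarrow> absorbing G1 G2 d x"
    and zeta_opt: "\<And>j. j \<ge> 1 \<Longrightarrow>
      Pre1_sel G2 d (zeta j) (u_iter G1 G2 d T (j - 1)) = Pre1 G1 G2 d (u_iter G1 G2 d T (j - 1))"
    and entry_pos: "0 < entry G1 G2 d T k s"
    and b: "b \<in> G2 s"
    and no_improvement: "\<And>t. t \<in> Dest_k G1 G2 d T zeta k s b \<Longrightarrow>
      u_iter G1 G2 d T k t \<le> u_iter G1 G2 d T k s"
    and t: "t \<in> Dest_k G1 G2 d T zeta k s b"
  shows "u_iter G1 G2 d T (entry G1 G2 d T k s - 1) t = u_iter G1 G2 d T k s"
    and "u_iter G1 G2 d T k t = u_iter G1 G2 d T k s"
proof -
  let ?u = "u_iter G1 G2 d T" and ?l = "entry G1 G2 d T k s"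
  have "?l - 1 \<le> k"
    using entry_le[of G1 G2 d T k s] by simp
  then have mono: "?u (?l - 1) x \<le> ?u k x" for x
    using u_iter_mono[of G1 G2 T d, OF G1_ne G2_ne absorb] by blast
  have below: "?u (?l - 1) x \<le> ?u k s" if "x \<in> Dest_k G1 G2 d T zeta k s b" for x
    using mono no_improvement[OF that] by (rule order_trans)
  show prev_eq: "?u (?l - 1) t = ?u k s"
    using t below u_iter_le_mean_eta[of G1 G2, OF G1_ne G2_ne zeta_opt entry_pos b]
    unfolding Dest_k_eq_set_pmf by (intro pmf_support_eq_if_mean_ge) auto
  show "?u k t = ?u k s"
    using mono[of t] no_improvement[OF t] prev_eq by linarith
qed

theorem lemma4:
  fixes G1 G2 :: "'s::finite \<Rightarrow> 'm::finite set"
    and d :: "'s \<Rightarrow> 'm \<Rightarrow> 'm \<Rightarrow> 's pmf"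
    and T :: "'s set"
    and zeta :: "nat \<Rightarrow> 's \<Rightarrow> 'm pmf"
    and r :: real and k :: nat and s :: 's and a2 :: 'm
  assumes G1_ne: "\<And>x. G1 x \<noteq> {}"
    and G2_ne: "\<And>x. G2 x \<noteq> {}"
    and absorb: "\<And>x. x \<in> T \<union> W2 G1 G2 d T \<Longrightarrow> absorbing G1 G2 d x"
    and zeta_sel: "\<And>j. j \<ge> 1 \<Longrightarrow> zeta j \<in> selectors G1"
    and zeta_opt: "\<And>j. j \<ge> 1 \<Longrightarrow>
         Pre1_sel G2 d (zeta j) (u_iter G1 G2 d T (j - 1)) = Pre1 G1 G2 d (u_iter G1 G2 d T (j - 1))"
    and r_pos: "0 < r" and r_le: "r \<le> 1"
    and s_notin: "s \<notin> T \<union> W2 G1 G2 d T"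
    and s_val: "u_iter G1 G2 d T k s = r"
    and a2_in: "a2 \<in> G2 s"
  shows "(\<exists>t\<in>Dest_k G1 G2 d T zeta k s a2. u_iter G1 G2 d T k t > r)
       \<or> (Dest_k G1 G2 d T zeta k s a2 \<subseteq> {t. u_iter G1 G2 d T k t = r}
          \<and> (\<exists>t\<in>Dest_k G1 G2 d T zeta k s a2. entry G1 G2 d T k t < entry G1 G2 d T k s))"
proof -
  let ?u = "u_iter G1 G2 d T" and ?D = "Dest_k G1 G2 d T zeta k s a2"
  let ?l = "entry G1 G2 d T k s"
  have "?u ?l s = r"
    using u_iter_entry[of G1 G2 d T k s] s_val by simp
  moreover have "?u 0 s = 0"
    using s_notin by (simp add: u_iter_0)
  ultimately have l_pos: "0 < ?l"
    using r_pos by (cases ?l) auto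
  have absorb_T: "\<And>x. x \<in> T \<Longrightarrow> absorbing G1 G2 d x"
    using absorb by blast
  show ?thesis
  proof (cases "\<exists>t\<in>?D. ?u k t > r")
    case False
    then have no_improvement: "\<And>t. t \<in> ?D \<Longrightarrow> ?u k t \<le> ?u k s"
      using s_val by auto
    note on_D = u_iter_eq_on_Dest_k_if_no_improvement[of G1 G2 T d zeta k s a2]
    have prev_eq: "?u (?l - 1) t = r" and now_eq: "?u k t = r" if "t \<in> ?D" for t
      unfolding s_val[symmetric]
      by (rule on_D(1) on_D(2);
          fact G1_ne G2_ne absorb_T zeta_opt l_pos a2_in no_improvement that)+
    have "?D \<subseteq> {t. ?u k t = r}"
      using now_eq by blast
    moreover obtain t where t: "t \<in> ?D"
      unfolding Dest_k_eq_set_pmf using set_pmf_not_empty by fast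
    moreover have "entry G1 G2 d T k t \<le> ?l - 1"
      using entry_le[of G1 G2 d T k s] prev_eq[OF t] now_eq[OF t]
      by (intro entry_le_if_u_iter_eq) simp_all
    with l_pos have "entry G1 G2 d T k t < ?l"
      by linarith
    ultimately show ?thesis
      by blast
  qed blast
qed

end
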